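(* For every $n\ge1$, the map $f\colon\mathcal{T}_n(P,e)\to\mathcal{M}'_{n-1}(Z)$ is a bijection in each of the following four cases: (i) $(P,e)=(2134,111)$, $Z=\{\mathtt{U}\mathtt{U},\mathtt{U}\mathtt{F}_R\}$; (ii) $(P,e)=(3214,111)$, $Z=\{\mathtt{D}\mathtt{U},\mathtt{D}\mathtt{F}_L\}$; (iii) $(P,e)=(1324,111)$, $Z=\{\mathtt{U}\mathtt{U},\mathtt{F}_R\mathtt{U}\}$; (iv) $(P,e)=(1243,111)$, $Z=\{\mathtt{U},\mathtt{F}_R\}\times\{\mathtt{U},\mathtt{F}_R\}\times\{\mathtt{U},\mathtt{F}_L\}$ (all 8 three-letter words $xyz$ with $x,y\in\{\mathtt U,\mathtt F_R\}$, $z\in\{\mathtt U,\mathtt F_L\}$). Moreover, $(2134,111)=(2134,\text{-}1\text{-})$, $(3214,111)=(3214,1\text{-}\text{-})$, $(1324,111)=(1324,1\text{-}\text{-})$ and $(1243,111)=(1243,1\text{-}\text{-})$ in the sense that the set of avoiding trees does not change when the entries marked "-" are replaced by arbitrary values in $\{0,1\}$. Furthermore, for each $n\ge1$ these four sets of Motzkin paths have the same cardinality, and these cardinalities form the sequence OEIS A025242, whose terms for $n=1,2,3,\dots$ are $1,2,5,13,35,97,275,794,2327,6905,\dots$.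
   Context: $\mathcal{T}_n$ is the set of binary trees on $n$ vertices labeled $1,\dots,n$ by the search tree property; $r(T)$ root, $L(T),R(T)$ the left and right subtrees of the root, $c_L,c_R,p$ left child, right child, parent. A tree pattern is $(P,e)$, $P\in\mathcal{T}_k$, $e\colon[k]\setminus\{r(P)\}\to\{0,1\}$; $T$ contains $(P,e)$ if there is an injection $f\colon[k]\to[n]$ such that for each non-root $i$ of $P$: if $e(i)=1$, $f(i)$ is the left (resp. right) child of $f(p(i))$ when $i$ is the left (resp. right) child of $p(i)$; if $e(i)=0$, $f(i)$ lies in the left (resp. right) subtree of $f(p(i))$. $\mathcal{T}_n(P,e)$ is the set of avoiders. Compact notation: $(\tau_1\cdots\tau_k,\,x_2\cdots x_k)$ denotes the pattern $(P,e)$ whose preorder sequence (root, then recursively left subtree, then right subtree) is $\tau_1,\dots,\tau_k$ and with $e(\tau_j)=x_j$. Motzkin paths with 2-colored flat steps: words over $\{\mathtt U,\mathtt D,\mathtt F_L,\mathtt F_R\}$ where $\mathtt U=(1,1)$, $\mathtt D=(1,-1)$, $\mathtt F_L,\mathtt F_R=(1,0)$, starting at $(0,0)$, ending on the $x$-axis, never going below it; $\mathcal{M}'_m$ is the set of such paths with $m$ steps, and $\mathcal{M}'_m(Z)$ those containing no word of $Z$ as a consecutive substring. The map $f$ on nonempty binary trees: if $r(T)$ has no children, $f(T)$ is the empty path; if it has only a left child, $f(T)=\mathtt F_L\,f(L(T))$; if only a right child, $f(T)=\mathtt F_R\,f(R(T))$; if two children, $f(T)=\mathtt U\,f(R(T))\,\mathtt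 D\,f(L(T))$. *)

theory Defs
  imports Main "HOL-Library.Tree" "HOL-Library.Sublist"
begin

definition bsts :: "nat \<Rightarrow> nat tree set" where
  "bsts n = {T. inorder T = [1..<n+1]}"

definition is_lchild :: "nat tree \<Rightarrow> nat \<Rightarrow> nat \<Rightarrow> bool" where
  "is_lchild T a b \<longleftrightarrow> (\<exists>l' r' r. Node (Node l' b r') a r \<in> subtrees T)"

definition is_rchild :: "nat tree \<Rightarrow> nat \<Rightarrow> nat \<Rightarrow> bool" where
  "is_rchild T a b \<longleftrightarrow> (\<exists>l l' r'. Node l a (Node l' b r') \<in> subtrees T)"

definition in_lsub :: "nat tree \<Rightarrow> nat \<Rightarrow> nat \<Rightarrow> bool" where
  "in_lsub T a b \<longleftrightarrow> (\<exists>l r. Node l a r \<in> subtrees T \<and> b \<in> set_tree l)"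

definition in_rsub :: "nat tree \<Rightarrow> nat \<Rightarrow> nat \<Rightarrow> bool" where
  "in_rsub T a b \<longleftrightarrow> (\<exists>l r. Node l a r \<in> subtrees T \<and> b \<in> set_tree r)"

text \<open>Only the values of e on non-root vertices matter.\<close>
definition contains :: "nat tree \<Rightarrow> nat tree \<Rightarrow> (nat \<Rightarrow> bool) \<Rightarrow> bool" where
  "contains T P e \<longleftrightarrow> (\<exists>f. inj_on f (set_tree P) \<and> f ` set_tree P \<subseteq> set_tree T \<and>
     (\<forall>l a r. Node l a r \<in> subtrees P \<longrightarrow>
        (\<forall>l' b r'. l = Node l' b r' \<longrightarrow>
            (if e b then is_lchild T (f a) (f b) else in_lsub T (f a) (f b))) \<and>
        (\<forall>l' b r'. r = Node l' b r' \<longrightarrow>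
            (if e b then is_rchild T (f a) (f b) else in_rsub T (f a) (f b)))))"

definition avoiders :: "nat \<Rightarrow> nat tree \<Rightarrow> (nat \<Rightarrow> bool) \<Rightarrow> nat tree set" where
  "avoiders n P e = {T \<in> bsts n. \<not> contains T P e}"

text \<open>Compact notation (tau_1...tau_k, x_2...x_k): the search tree with preorder
  sequence tau, and e(tau_j) = x_j for j \<ge> 2.\<close>
fun bst_of_preorder :: "nat list \<Rightarrow> nat tree" where
  "bst_of_preorder [] = Leaf"
| "bst_of_preorder (x # xs) =
     Node (bst_of_preorder (filter (\<lambda>y. y < x) xs)) x (bst_of_preorder (filter (\<lambda>y. x < y) xs))"

definition pat_tree :: "nat list \<Rightarrow> nat tree" where
  "pat_tree tau = bst_of_preorder tau"

definition pat_e :: "nat list \<Rightarrow> bool list \<Rightarrow> nat \<Rightarrow> bool" where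
  "pat_e tau xs = (\<lambda>i. map_of (zip (tl tau) xs) i = Some True)"

definition avoiders_c :: "nat \<Rightarrow> nat list \<Rightarrow> bool list \<Rightarrow> nat tree set" where
  "avoiders_c n tau xs = avoiders n (pat_tree tau) (pat_e tau xs)"

datatype step = U | D | FL | FR

fun step_height :: "step \<Rightarrow> int" where
  "step_height U = 1"
| "step_height D = -1"
| "step_height FL = 0"
| "step_height FR = 0"

definition motzkin :: "step list \<Rightarrow> bool" where
  "motzkin w \<longleftrightarrow> (\<forall>k \<le> length w. 0 \<le> sum_list (map step_height (take k w)))
                   \<and> sum_list (map step_height w) = 0"

definition motzkin_avoid :: "nat \<Rightarrow> step list set \<Rightarrow> step list set" where
  "motzkin_avoid m Z = {w. length w = m \<and> motzkin w \<and> (\<forall>z \<in> Z. \<not> sublist z w)}"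

fun fpath :: "'a tree \<Rightarrow> step list" where
  "fpath Leaf = []"
| "fpath (Node Leaf _ Leaf) = []"
| "fpath (Node l _ Leaf) = FL # fpath l"
| "fpath (Node Leaf _ r) = FR # fpath r"
| "fpath (Node l _ r) = U # fpath r @ [D] @ fpath l"

text \<open>a n is the n-th term (n = 1,2,3,...: 1,2,5,13,35,...).  With
  A(x) = sum_{n\<ge>1} a n x^(n-1) the generating function satisfies
  A = 1 + (2x + x^2) A + x^3 A^2, i.e. A(x) = (1-2x-x^2-sqrt(1-4x+2x^2+x^4))/(2x^3),
  the generating function of A025242 (shifted).  a25242_aux m = a (m+1).\<close>
fun a25242_aux :: "nat \<Rightarrow> nat" where
  "a25242_aux 0 = 1"
| "a25242_aux (Suc 0) = 2"
| "a25242_aux (Suc (Suc 0)) = 5"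
| "a25242_aux (Suc (Suc (Suc m))) =
     2 * a25242_aux (Suc (Suc m)) + a25242_aux (Suc m) + (\<Sum>i\<le>m. a25242_aux i * a25242_aux (m - i))"

definition A025242 :: "nat \<Rightarrow> nat" where
  "A025242 n = a25242_aux (n - 1)"

end

(*
  f(T) depends only on the shape of T.  Through the first-return decomposition U u D v of
  Motzkin paths, f is a bijection from shapes with n vertices onto paths with n - 1 steps, and
  a search tree is determined by its shape.

  For each of the four patterns, the entries marked "-" are harmless: a relaxed edge to a leaf
  of the pattern only asks for a nonempty subtree, and for 1243 the relaxed edge 2 -> 4 can be
  shortened to the first left turn below 2.  So a tree avoids the pattern iff no subtree has the
  shape of the pattern hanging from its root.  A forbidden factor of f(T) is a prefix of f(S)
  for a subtree S (or, for D-factors, straddles the D of a vertex with two children), and it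
  appears exactly where that local shape does.  Finally the avoiding shapes with nonempty right
  subtree are generated from Node X (Node Y Leaf) by inserting a vertex on the right spine at a
  fixed depth; this gives the recurrence of A025242, and 3214 is the mirror image of 2134.
*)
theory Submission
  imports Defs
begin

section \<open>Motzkin paths\<close>

fun motzkin_from :: "int \<Rightarrow> step list \<Rightarrow> bool" where
  "motzkin_from h [] \<longleftrightarrow> h = 0"
| "motzkin_from h (x # xs) \<longleftrightarrow> 0 \<le> h \<and> motzkin_from (h + step_height x) xs"

lemma motzkin_from_iff:
  "motzkin_from h w \<longleftrightarrow>
     (\<forall>k\<le>length w. 0 \<le> h + sum_list (map step_height (take k w))) \<and>
     h + sum_list (map step_height w) = 0"
proof (induction w arbitrary: h)
  case (Cons x xs)
  have "(\<forall>k\<le>Suc n. P k) \<longleftrightarrow> P 0 \<and> (\<forall>k\<le>n. P (Suc k))" for n and P :: "nat \<Rightarrow> bool"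
    by (metis Suc_le_mono le0 not0_implies_Suc)
  then show ?case
    by (simp add: Cons.IH add.assoc)
qed auto

lemma motzkin_iff_motzkin_from: "motzkin w \<longleftrightarrow> motzkin_from 0 w"
  by (simp add: motzkin_def motzkin_from_iff)

lemma motzkin_from_nonneg: "motzkin_from h w \<Longrightarrow> 0 \<le> h"
  by (cases w) auto

inductive motzkin_grammar :: "step list \<Rightarrow> bool" where
  empty: "motzkin_grammar []"
| flat_left: "motzkin_grammar w \<Longrightarrow> motzkin_grammar (FL # w)"
| flat_right: "motzkin_grammar w \<Longrightarrow> motzkin_grammar (FR # w)"
| up_down: "motzkin_grammar u \<Longrightarrow> motzkin_grammar v \<Longrightarrow> motzkin_grammar (U # u @ D # v)"

lemma motzkin_from_append_grammar:
  "motzkin_grammar u \<Longrightarrow> motzkin_from h (u @ v) \<longleftrightarrow> motzkin_from h v"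
proof (induction arbitrary: h v rule: motzkin_grammar.induct)
  case (up_down u w)
  then show ?case
    using motzkin_from_nonneg by (fastforce simp: add.commute)
qed (use motzkin_from_nonneg in auto)

text \<open>The factorisation of a path from height \<open>h\<close> at its first passages to the heights
  \<open>h - 1, \<dots>, 0\<close>.\<close>
fun motzkin_grammar_from :: "nat \<Rightarrow> step list \<Rightarrow> bool" where
  "motzkin_grammar_from 0 w = motzkin_grammar w"
| "motzkin_grammar_from (Suc h) w =
     (\<exists>u v. w = u @ D # v \<and> motzkin_grammar u \<and> motzkin_grammar_from h v)"

lemma motzkin_grammar_from_Cons_flat:
  assumes "motzkin_grammar_from h w" and "x \<in> {FL, FR}"
  shows "motzkin_grammar_from h (x # w)"
proof (cases h)
  case 0
  then show ?thesis
    using assms by (auto intro: motzkin_grammar.intros)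
next
  case (Suc h')
  with assms(1) obtain u v where "w = u @ D # v" "motzkin_grammar u" "motzkin_grammar_from h' v"
    by auto
  moreover have "motzkin_grammar (x # u)"
    using \<open>motzkin_grammar u\<close> assms(2) by (auto intro: motzkin_grammar.intros)
  moreover have "x # w = (x # u) @ D # v"
    using \<open>w = u @ D # v\<close> by simp
  ultimately show ?thesis
    using Suc \<open>motzkin_grammar_from h' v\<close> by (simp only: motzkin_grammar_from.simps) blast
qed

lemma motzkin_grammar_from_Cons_up:
  assumes "motzkin_grammar u" and "motzkin_grammar_from h v"
  shows "motzkin_grammar_from h (U # u @ D # v)"
proof (cases h)
  case 0
  then show ?thesis
    using assms by (auto intro: motzkin_grammar.intros)
next
  case (Suc h')
  with assms(2) obtain v1 v2 where "v = v1 @ D # v2" "motzkin_grammar v1" "motzkin_grammar_from h' v2"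
    by auto
  moreover have "motzkin_grammar (U # u @ D # v1)"
    using assms(1) \<open>motzkin_grammar v1\<close> by (rule motzkin_grammar.up_down)
  moreover have "U # u @ D # v = (U # u @ D # v1) @ D # v2"
    using \<open>v = v1 @ D # v2\<close> by simp
  ultimately show ?thesis
    using Suc \<open>motzkin_grammar_from h' v2\<close> by (simp only: motzkin_grammar_from.simps) blast
qed

lemma motzkin_grammar_from_if_motzkin_from:
  "motzkin_from (int h) w \<Longrightarrow> motzkin_grammar_from h w"
proof (induction w arbitrary: h)
  case Nil
  then show ?case
    by (auto intro: motzkin_grammar.intros)
next
  case (Cons x w)
  show ?case
  proof (cases x)
    case U
    then have "motzkin_from (int (Suc h)) w"
      using Cons.prems by (simp add: add.commute)
    then have "motzkin_grammar_from (Suc h) w"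
      by (rule Cons.IH)
    then obtain u v where "w = u @ D # v" "motzkin_grammar u" "motzkin_grammar_from h v"
      by (auto simp only: motzkin_grammar_from.simps)
    then show ?thesis
      using U motzkin_grammar_from_Cons_up by simp
  next
    case D
    then have "motzkin_from (int h - 1) w"
      using Cons.prems by simp
    moreover from this obtain h' where "h = Suc h'"
      using motzkin_from_nonneg[of "int h - 1" w] by (cases h) auto
    ultimately show ?thesis
      using D Cons.IH[of h'] motzkin_grammar.empty by fastforce
  next
    case FL
    then show ?thesis
      using Cons motzkin_grammar_from_Cons_flat by simp
  next
    case FR
    then show ?thesis
      using Cons motzkin_grammar_from_Cons_flat by simp
  qed
qed

lemma motzkin_iff_grammar: "motzkin w \<longleftrightarrow> motzkin_grammar w"
  using motzkin_grammar_from_if_motzkin_from[of 0 w] motzkin_from_append_grammar[of w 0 "[]"]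
  by (auto simp: motzkin_iff_motzkin_from)

lemma not_motzkin_grammar_append_D:
  assumes "motzkin_grammar u"
  shows "\<not> motzkin_grammar (u @ D # v)"
proof
  assume "motzkin_grammar (u @ D # v)"
  then have "motzkin_from 0 (u @ D # v)"
    by (simp add: motzkin_iff_grammar[symmetric] motzkin_iff_motzkin_from)
  then have "motzkin_from 0 (D # v)"
    using motzkin_from_append_grammar[OF assms] by simp
  then show False
    using motzkin_from_nonneg[of "-1" v] by simp
qed

lemma motzkin_grammar_D_factor_unique:
  assumes "motzkin_grammar u" "motzkin_grammar u'" "u @ D # v = u' @ D # v'"
  shows "u = u' \<and> v = v'"
proof -
  from assms(3) obtain us where
    "u = u' @ us \<and> us @ D # v = D # v' \<or> u @ us = u' \<and> D # v = us @ D # v'"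
    by (auto simp: append_eq_append_conv2)
  then show ?thesis
  proof (elim disjE conjE)
    assume "u = u' @ us" "us @ D # v = D # v'"
    then show ?thesis
      using not_motzkin_grammar_append_D[OF assms(2)] assms(1) by (cases us) auto
  next
    assume "u @ us = u'" "D # v = us @ D # v'"
    then show ?thesis
      using not_motzkin_grammar_append_D[OF assms(1)] assms(2) by (cases us) auto
  qed
qed

section \<open>The map \<open>f\<close> is a bijection onto Motzkin paths\<close>

lemma fpath_Node:
  "fpath (Node l a r) =
     (if l = Leaf then if r = Leaf then [] else FR # fpath r
      else if r = Leaf then FL # fpath l else U # fpath r @ D # fpath l)"
  by (cases l; cases r) auto

lemma motzkin_grammar_fpath: "motzkin_grammar (fpath T)"
  by (induction T) (auto simp: fpath_Node intro: motzkin_grammar.intros)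

lemma length_fpath: "T \<noteq> Leaf \<Longrightarrow> Suc (length (fpath T)) = size T"
  by (induction T) (auto simp: fpath_Node)

lemma fpath_inj_unit:
  "fpath S = fpath T \<Longrightarrow> S \<noteq> Leaf \<Longrightarrow> T \<noteq> Leaf \<Longrightarrow> S = (T :: unit tree)"
proof (induction S arbitrary: T)
  case (Node l u r)
  then obtain l' r' where T: "T = Node l' () r'"
    by (cases T) auto
  have "(l = Leaf \<longleftrightarrow> l' = Leaf) \<and> (r = Leaf \<longleftrightarrow> r' = Leaf) \<and> fpath l = fpath l' \<and> fpath r = fpath r'"
    using Node.prems(1) motzkin_grammar_D_factor_unique[OF motzkin_grammar_fpath motzkin_grammar_fpath]
    by (auto simp: T fpath_Node split: if_splits)
  then show ?case
    using Node.IH T by (cases "l = Leaf"; cases "r = Leaf") auto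
qed simp

lemma fpath_surj_unit:
  "motzkin_grammar w \<Longrightarrow> \<exists>T :: unit tree. size T = Suc (length w) \<and> fpath T = w"
proof (induction rule: motzkin_grammar.induct)
  case empty
  show ?case
    by (rule exI[of _ "Node Leaf () Leaf"]) simp
next
  case (flat_left w)
  then obtain T :: "unit tree" where "size T = Suc (length w)" "fpath T = w"
    by blast
  then show ?case
    by (intro exI[of _ "Node T () Leaf"]) (auto simp: fpath_Node)
next
  case (flat_right w)
  then obtain T :: "unit tree" where "size T = Suc (length w)" "fpath T = w"
    by blast
  then show ?case
    by (intro exI[of _ "Node Leaf () T"]) (auto simp: fpath_Node)
next
  case (up_down u v)
  then obtain L R :: "unit tree" where
    "size R = Suc (length u)" "fpath R = u" "size L = Suc (length v)" "fpath L = v"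
    by blast
  then show ?case
    by (intro exI[of _ "Node L () R"]) (auto simp: fpath_Node)
qed

lemma bij_betw_fpath_unit:
  assumes "n \<ge> 1"
  shows "bij_betw fpath {T :: unit tree. size T = n} {w. length w = n - 1 \<and> motzkin w}"
proof (rule bij_betw_imageI)
  show "inj_on fpath {T :: unit tree. size T = n}"
    using assms fpath_inj_unit by (fastforce intro: inj_onI)
  show "fpath ` {T :: unit tree. size T = n} = {w. length w = n - 1 \<and> motzkin w}"
  proof (intro equalityI subsetI)
    fix w assume "w \<in> fpath ` {T :: unit tree. size T = n}"
    then obtain T :: "unit tree" where "size T = n" "w = fpath T"
      by auto
    moreover from this have "T \<noteq> Leaf"
      using assms by auto
    ultimately show "w \<in> {w. length w = n - 1 \<and> motzkin w}"
      using length_fpath[of T] motzkin_grammar_fpath[of T] by (auto simp: motzkin_iff_grammar)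
  next
    fix w assume "w \<in> {w. length w = n - 1 \<and> motzkin w}"
    then show "w \<in> fpath ` {T :: unit tree. size T = n}"
      using assms fpath_surj_unit[of w] by (force simp: motzkin_iff_grammar)
  qed
qed

definition shape :: "'a tree \<Rightarrow> unit tree" where
  "shape = map_tree (\<lambda>_. ())"

lemma size_shape[simp]: "size (shape T) = size T"
  by (simp add: shape_def)

lemma fpath_shape[simp]: "fpath (shape T) = fpath T"
  by (induction T) (auto simp: shape_def fpath_Node)

lemma tree_eq_if_shape_inorder_eq:
  "shape S = shape T \<Longrightarrow> inorder S = inorder T \<Longrightarrow> S = T"
proof (induction S arbitrary: T)
  case (Node l a r)
  then obtain l' a' r' where T: "T = Node l' a' r'"
    by (cases T) (auto simp: shape_def)
  with Node.prems have "shape l = shape l'" "shape r = shape r'"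
    by (auto simp: shape_def)
  then have "size l = size l'"
    by (metis size_shape)
  with Node.prems T have "inorder l = inorder l' \<and> a = a' \<and> inorder r = inorder r'"
    by auto
  with Node.IH T \<open>shape l = shape l'\<close> \<open>shape r = shape r'\<close> show ?case
    by auto
qed (simp add: shape_def)

lemma exists_tree_with_shape_inorder:
  "length xs = size S \<Longrightarrow> \<exists>T. shape T = S \<and> inorder T = xs"
proof (induction S arbitrary: xs)
  case Leaf
  then show ?case
    by (auto intro!: exI[of _ Leaf] simp: shape_def)
next
  case (Node l u r)
  obtain L where L: "shape L = l" "inorder L = take (size l) xs"
    using Node.IH(1)[of "take (size l) xs"] Node.prems by auto
  obtain R where R: "shape R = r" "inorder R = drop (Suc (size l)) xs"
    using Node.IH(2)[of "drop (Suc (size l)) xs"] Node.prems by auto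
  have "xs = take (size l) xs @ xs ! size l # drop (Suc (size l)) xs"
    using Node.prems by (simp add: id_take_nth_drop)
  with L R show ?case
    by (intro exI[of _ "Node L (xs ! size l) R"]) (simp add: shape_def)
qed

lemma bij_betw_shape_bsts: "bij_betw shape (bsts n) {S. size S = n}"
proof (rule bij_betw_imageI)
  show "inj_on shape (bsts n)"
    by (rule inj_onI, rule tree_eq_if_shape_inorder_eq) (auto simp: bsts_def)
  show "shape ` bsts n = {S. size S = n}"
  proof (intro equalityI subsetI)
    fix S assume "S \<in> shape ` bsts n"
    then obtain T where "S = shape T" "inorder T = [1..<n + 1]"
      by (auto simp: bsts_def)
    then show "S \<in> {S. size S = n}"
      using length_inorder[of T] by (simp del: upt_Suc)
  next
    fix S :: "unit tree" assume "S \<in> {S. size S = n}"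
    then obtain T where "shape T = S" "inorder T = [1..<n + 1]"
      using exists_tree_with_shape_inorder[of "[1..<n + 1]" S] by (auto simp del: upt_Suc)
    then show "S \<in> shape ` bsts n"
      by (auto simp: bsts_def)
  qed
qed

lemma bij_betw_fpath_bsts:
  assumes "n \<ge> 1"
  shows "bij_betw fpath (bsts n) {w. length w = n - 1 \<and> motzkin w}"
proof -
  have "bij_betw (fpath \<circ> shape) (bsts n) {w. length w = n - 1 \<and> motzkin w}"
    using bij_betw_shape_bsts bij_betw_fpath_unit[OF assms] by (rule bij_betw_trans)
  then show ?thesis
    by (simp add: comp_def)
qed

section \<open>Local patterns and factors of the path\<close>

definition has_subtree :: "('a tree \<Rightarrow> bool) \<Rightarrow> 'a tree \<Rightarrow> bool" where
  "has_subtree g T \<longleftrightarrow> (\<exists>S\<in>subtrees T. g S)"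

lemma has_subtree_Leaf[simp]: "has_subtree g Leaf \<longleftrightarrow> g Leaf"
  by (simp add: has_subtree_def)

lemma has_subtree_Node[simp]:
  "has_subtree g (Node l a r) \<longleftrightarrow> g (Node l a r) \<or> has_subtree g l \<or> has_subtree g r"
  by (auto simp: has_subtree_def)

text \<open>\<open>S\<close> contains the pattern \<open>(P, 1\<dots>1)\<close> with the root of \<open>P\<close> sent to the root of \<open>S\<close>.\<close>
fun embeds_at_root :: "'a tree \<Rightarrow> 'b tree \<Rightarrow> bool" where
  "embeds_at_root Leaf _ \<longleftrightarrow> True"
| "embeds_at_root (Node _ _ _) Leaf \<longleftrightarrow> False"
| "embeds_at_root (Node l _ r) (Node l' _ r') \<longleftrightarrow> embeds_at_root l l' \<and> embeds_at_root r r'"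

lemma embeds_at_root_Node_iff:
  "embeds_at_root (Node l x r) S \<longleftrightarrow>
     (\<exists>l' y r'. S = Node l' y r' \<and> embeds_at_root l l' \<and> embeds_at_root r r')"
  by (cases S) auto

lemma pat_tree_2134: "pat_tree [2,1,3,4] = Node (Node Leaf 1 Leaf) 2 (Node Leaf 3 (Node Leaf 4 Leaf))"
  by (simp add: pat_tree_def)

lemma pat_tree_3214: "pat_tree [3,2,1,4] = Node (Node (Node Leaf 1 Leaf) 2 Leaf) 3 (Node Leaf 4 Leaf)"
  by (simp add: pat_tree_def)

lemma pat_tree_1324: "pat_tree [1,3,2,4] = Node Leaf 1 (Node (Node Leaf 2 Leaf) 3 (Node Leaf 4 Leaf))"
  by (simp add: pat_tree_def)

lemma pat_tree_1243: "pat_tree [1,2,4,3] = Node Leaf 1 (Node Leaf 2 (Node (Node Leaf 3 Leaf) 4 Leaf))"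
  by (simp add: pat_tree_def)

lemma embeds_at_root_2134:
  "embeds_at_root (pat_tree [2,1,3,4]) =
     (\<lambda>S. \<exists>l a rl c rr. S = Node l a (Node rl c rr) \<and> l \<noteq> Leaf \<and> rr \<noteq> Leaf)"
  unfolding pat_tree_2134 by (auto simp: embeds_at_root_Node_iff neq_Leaf_iff fun_eq_iff)

lemma embeds_at_root_3214:
  "embeds_at_root (pat_tree [3,2,1,4]) =
     (\<lambda>S. \<exists>ll b lr a r. S = Node (Node ll b lr) a r \<and> ll \<noteq> Leaf \<and> r \<noteq> Leaf)"
  unfolding pat_tree_3214 by (auto simp: embeds_at_root_Node_iff neq_Leaf_iff fun_eq_iff)

lemma embeds_at_root_1324:
  "embeds_at_root (pat_tree [1,3,2,4]) =
     (\<lambda>S. \<exists>l a rl c rr. S = Node l a (Node rl c rr) \<and> rl \<noteq> Leaf \<and> rr \<noteq> Leaf)"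
  unfolding pat_tree_1324 by (auto simp: embeds_at_root_Node_iff neq_Leaf_iff fun_eq_iff)

lemma embeds_at_root_1243:
  "embeds_at_root (pat_tree [1,2,4,3]) =
     (\<lambda>S. \<exists>l a l2 b l3 c r3. S = Node l a (Node l2 b (Node l3 c r3)) \<and> l3 \<noteq> Leaf)"
  unfolding pat_tree_1243 by (auto simp: embeds_at_root_Node_iff neq_Leaf_iff fun_eq_iff)

lemma prefix_append_D: "D \<notin> set z \<Longrightarrow> prefix z (u @ D # v) \<longleftrightarrow> prefix z u"
  by (induction u arbitrary: z) (auto simp: prefix_Cons)

lemma sublist_append_D: "D \<notin> set z \<Longrightarrow> sublist z (u @ D # v) \<longleftrightarrow> sublist z u \<or> sublist z v"
proof (induction u)
  case Nil
  then show ?case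
    by (cases z) (auto simp: sublist_Cons_right)
next
  case (Cons x u)
  then show ?case
    using prefix_append_D[OF Cons.prems, of "x # u" v] by (auto simp: sublist_Cons_right)
qed

lemma prefix_Cons_fpath:
  assumes "D \<notin> set zs"
  shows "prefix (U # zs) (fpath T) \<longleftrightarrow>
           (\<exists>l a r. T = Node l a r \<and> l \<noteq> Leaf \<and> r \<noteq> Leaf \<and> prefix zs (fpath r))"
    and "prefix (FR # zs) (fpath T) \<longleftrightarrow> (\<exists>a r. T = Node Leaf a r \<and> r \<noteq> Leaf \<and> prefix zs (fpath r))"
    and "prefix (FL # zs) (fpath T) \<longleftrightarrow> (\<exists>l a. T = Node l a Leaf \<and> l \<noteq> Leaf \<and> prefix zs (fpath l))"
  using assms by (cases T; auto simp: fpath_Node prefix_append_D)+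

lemma sublist_fpath_Node:
  assumes "D \<notin> set z"
  shows "sublist z (fpath (Node l a r)) \<longleftrightarrow>
           prefix z (fpath (Node l a r)) \<or> sublist z (fpath l) \<or> sublist z (fpath r)"
  using assms by (auto simp: fpath_Node sublist_Cons_right sublist_append_D)

text \<open>A factor without down steps is a prefix of the path of some subtree.\<close>
lemma sublist_fpath_iff_has_subtree:
  assumes "\<forall>z\<in>Z. D \<notin> set z" and "\<And>S. (\<exists>z\<in>Z. prefix z (fpath S)) \<longleftrightarrow> g S"
  shows "(\<exists>z\<in>Z. sublist z (fpath T)) \<longleftrightarrow> has_subtree g T"
proof (induction T)
  case Leaf
  then show ?case
    using assms(2)[of Leaf] by simp
next
  case (Node l a r)
  then show ?case
    using assms sublist_fpath_Node by (metis has_subtree_Node)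
qed

lemma sublist_fpath_2134:
  "(\<exists>z\<in>{[U,U], [U,FR]}. sublist z (fpath T)) \<longleftrightarrow> has_subtree (embeds_at_root (pat_tree [2,1,3,4])) T"
  by (rule sublist_fpath_iff_has_subtree, unfold embeds_at_root_2134)
    (auto simp: prefix_Cons_fpath)

lemma sublist_fpath_1324:
  "(\<exists>z\<in>{[U,U], [FR,U]}. sublist z (fpath T)) \<longleftrightarrow> has_subtree (embeds_at_root (pat_tree [1,3,2,4])) T"
  by (rule sublist_fpath_iff_has_subtree, unfold embeds_at_root_1324)
    (auto simp: prefix_Cons_fpath)

lemma sublist_fpath_1243:
  "(\<exists>z\<in>{[x,y,z] | x y z. x \<in> {U,FR} \<and> y \<in> {U,FR} \<and> z \<in> {U,FL}}. sublist z (fpath T)) \<longleftrightarrow>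
     has_subtree (embeds_at_root (pat_tree [1,2,4,3])) T"
proof (rule sublist_fpath_iff_has_subtree, unfold embeds_at_root_1243)
  fix S :: "'a tree"
  show "(\<exists>z\<in>{[x,y,z] | x y z. x \<in> {U,FR} \<and> y \<in> {U,FR} \<and> z \<in> {U,FL}}. prefix z (fpath S)) \<longleftrightarrow>
          (\<exists>l a l2 b l3 c r3. S = Node l a (Node l2 b (Node l3 c r3)) \<and> l3 \<noteq> Leaf)"
  proof
    assume "\<exists>l a l2 b l3 c r3. S = Node l a (Node l2 b (Node l3 c r3)) \<and> l3 \<noteq> Leaf"
    then obtain l a l2 b l3 c r3 where "S = Node l a (Node l2 b (Node l3 c r3))" "l3 \<noteq> Leaf"
      by blast
    then have "prefix [if l = Leaf then FR else U, if l2 = Leaf then FR else U,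
                       if r3 = Leaf then FL else U] (fpath S)"
      by (cases "l = Leaf"; cases "l2 = Leaf"; cases "r3 = Leaf") (auto simp: fpath_Node)
    then show "\<exists>z\<in>{[x,y,z] | x y z. x \<in> {U,FR} \<and> y \<in> {U,FR} \<and> z \<in> {U,FL}}. prefix z (fpath S)"
      by (rule bexI) auto
  next
    assume "\<exists>z\<in>{[x,y,z] | x y z. x \<in> {U,FR} \<and> y \<in> {U,FR} \<and> z \<in> {U,FL}}. prefix z (fpath S)"
    then obtain x y z where "x \<in> {U,FR}" "y \<in> {U,FR}" "z \<in> {U,FL}" "prefix [x,y,z] (fpath S)"
      by blast
    then show "\<exists>l a l2 b l3 c r3. S = Node l a (Node l2 b (Node l3 c r3)) \<and> l3 \<noteq> Leaf"
      by (auto simp: prefix_Cons_fpath)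
  qed
qed auto

lemma sublist_D_fpath_Node:
  assumes "y \<noteq> D"
  shows "sublist [D, y] (fpath (Node l a r)) \<longleftrightarrow>
           l \<noteq> Leaf \<and> r \<noteq> Leaf \<and> prefix [y] (fpath l) \<or> sublist [D, y] (fpath l) \<or> sublist [D, y] (fpath r)"
proof -
  have "sublist [D, y] (u @ D # v) \<longleftrightarrow> sublist [D, y] u \<or> prefix [y] v \<or> sublist [D, y] v" for u v
    using assms by (induction u) (auto simp: sublist_Cons_right prefix_append_D)
  then show ?thesis
    using assms by (auto simp: fpath_Node sublist_Cons_right)
qed

lemma sublist_fpath_3214:
  "(\<exists>z\<in>{[D,U], [D,FL]}. sublist z (fpath T)) \<longleftrightarrow> has_subtree (embeds_at_root (pat_tree [3,2,1,4])) T"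
proof (induction T)
  case (Node l a r)
  have "(\<exists>z\<in>{[D,U], [D,FL]}. sublist z (fpath (Node l a r))) \<longleftrightarrow>
          (l \<noteq> Leaf \<and> r \<noteq> Leaf \<and> (\<exists>y\<in>{U, FL}. prefix [y] (fpath l))) \<or>
          (\<exists>z\<in>{[D,U], [D,FL]}. sublist z (fpath l)) \<or> (\<exists>z\<in>{[D,U], [D,FL]}. sublist z (fpath r))"
    using sublist_D_fpath_Node[of U l a r] sublist_D_fpath_Node[of FL l a r] by blast
  also have "(\<exists>y\<in>{U, FL}. prefix [y] (fpath l)) \<longleftrightarrow> (\<exists>ll b lr. l = Node ll b lr \<and> ll \<noteq> Leaf)"
    by (auto simp: prefix_Cons_fpath)
  finally show ?case
    unfolding Node.IH has_subtree_Node embeds_at_root_3214 by blast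
qed (unfold has_subtree_Leaf embeds_at_root_3214, simp)

section \<open>Pattern containment in search trees\<close>

lemma self_in_subtrees[simp]: "T \<in> subtrees T"
  by (cases T) auto

lemma subtrees_trans: "S \<in> subtrees T \<Longrightarrow> R \<in> subtrees S \<Longrightarrow> R \<in> subtrees T"
  by (induction T) auto

lemma set_tree_subset_if_subtree: "S \<in> subtrees T \<Longrightarrow> set_tree S \<subseteq> set_tree T"
  by (induction T) auto

lemma bst_if_subtree: "bst T \<Longrightarrow> S \<in> subtrees T \<Longrightarrow> bst S"
  by (induction T) auto

lemma bst_subtree_unique:
  "bst (T :: 'a :: linorder tree) \<Longrightarrow> Node l a r \<in> subtrees T \<Longrightarrow> Node l' a r' \<in> subtrees T \<Longrightarrow>
     l = l' \<and> r = r'"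
  by (induction T) (fastforce dest: in_set_tree_if)+

lemma is_lchild_if_subtree: "S \<in> subtrees T \<Longrightarrow> is_lchild S a b \<Longrightarrow> is_lchild T a b"
  unfolding is_lchild_def using subtrees_trans by blast

lemma is_rchild_if_subtree: "S \<in> subtrees T \<Longrightarrow> is_rchild S a b \<Longrightarrow> is_rchild T a b"
  unfolding is_rchild_def using subtrees_trans by blast

definition occurrence :: "nat tree \<Rightarrow> nat tree \<Rightarrow> (nat \<Rightarrow> bool) \<Rightarrow> (nat \<Rightarrow> nat) \<Rightarrow> bool" where
  "occurrence T P e f \<longleftrightarrow> inj_on f (set_tree P) \<and> f ` set_tree P \<subseteq> set_tree T \<and>
     (\<forall>l b r a r0. Node (Node l b r) a r0 \<in> subtrees P \<longrightarrow>
        (if e b then is_lchild T (f a) (f b) else in_lsub T (f a) (f b))) \<and>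
     (\<forall>l0 a l b r. Node l0 a (Node l b r) \<in> subtrees P \<longrightarrow>
        (if e b then is_rchild T (f a) (f b) else in_rsub T (f a) (f b)))"

lemma occurrence_left_edge:
  "occurrence T P e f \<Longrightarrow> Node (Node l b r) a r0 \<in> subtrees P \<Longrightarrow>
     if e b then is_lchild T (f a) (f b) else in_lsub T (f a) (f b)"
  unfolding occurrence_def by blast

lemma occurrence_right_edge:
  "occurrence T P e f \<Longrightarrow> Node l0 a (Node l b r) \<in> subtrees P \<Longrightarrow>
     if e b then is_rchild T (f a) (f b) else in_rsub T (f a) (f b)"
  unfolding occurrence_def by blast

lemma contains_iff_occurrence: "contains T P e \<longleftrightarrow> (\<exists>f. occurrence T P e f)"
proof -
  have "(\<forall>l a r. Node l a r \<in> subtrees P \<longrightarrow>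
          (\<forall>l' b r'. l = Node l' b r' \<longrightarrow> X a b) \<and> (\<forall>l' b r'. r = Node l' b r' \<longrightarrow> Y a b)) \<longleftrightarrow>
        (\<forall>l b r a r0. Node (Node l b r) a r0 \<in> subtrees P \<longrightarrow> X a b) \<and>
        (\<forall>l0 a l b r. Node l0 a (Node l b r) \<in> subtrees P \<longrightarrow> Y a b)" for X Y :: "nat \<Rightarrow> nat \<Rightarrow> bool"
    by blast
  then show ?thesis
    by (simp add: contains_def occurrence_def)
qed

abbreviation rigid_occurrence :: "nat tree \<Rightarrow> nat tree \<Rightarrow> (nat \<Rightarrow> nat) \<Rightarrow> bool" where
  "rigid_occurrence T P f \<equiv> occurrence T P (\<lambda>_. True) f"

lemma rigid_occurrence_iff:
  "rigid_occurrence T P f \<longleftrightarrow> inj_on f (set_tree P) \<and> f ` set_tree P \<subseteq> set_tree T \<and>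
     (\<forall>l b r a r0. Node (Node l b r) a r0 \<in> subtrees P \<longrightarrow> is_lchild T (f a) (f b)) \<and>
     (\<forall>l0 a l b r. Node l0 a (Node l b r) \<in> subtrees P \<longrightarrow> is_rchild T (f a) (f b))"
  by (simp add: occurrence_def)

lemma in_lsub_if_is_lchild: "is_lchild T a b \<Longrightarrow> in_lsub T a b"
  unfolding is_lchild_def in_lsub_def by force

lemma in_rsub_if_is_rchild: "is_rchild T a b \<Longrightarrow> in_rsub T a b"
  unfolding is_rchild_def in_rsub_def by force

lemma occurrence_if_rigid_occurrence: "rigid_occurrence T P f \<Longrightarrow> occurrence T P e f"
  by (simp add: occurrence_def in_lsub_if_is_lchild in_rsub_if_is_rchild)

lemma rigid_occurrence_cong:
  assumes "rigid_occurrence T P f" and "\<And>z. z \<in> set_tree P \<Longrightarrow> g z = f z"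
  shows "rigid_occurrence T P g"
proof -
  have eq: "g a = f a \<and> g b = f b" if "Node S a S' \<in> subtrees P" "b \<in> set_tree S \<union> set_tree S'"
    for S a S' b
    using that assms(2) set_tree_subset_if_subtree by fastforce
  have "is_lchild T (g a) (g b)" if "Node (Node l b r) a r0 \<in> subtrees P" for l b r a r0
    using occurrence_left_edge[OF assms(1) that] eq[OF that, of b] by simp
  moreover have "is_rchild T (g a) (g b)" if "Node l0 a (Node l b r) \<in> subtrees P" for l0 a l b r
    using occurrence_right_edge[OF assms(1) that] eq[OF that, of b] by simp
  moreover have "inj_on g (set_tree P)" "g ` set_tree P \<subseteq> set_tree T"
    using assms inj_on_cong[of "set_tree P" g f] by (auto simp: rigid_occurrence_iff)
  ultimately show ?thesis
    unfolding rigid_occurrence_iff by blast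
qed

lemma rigid_occurrence_if_subtree:
  assumes "rigid_occurrence S P f" and "S \<in> subtrees T"
  shows "rigid_occurrence T P f"
  using assms set_tree_subset_if_subtree[OF assms(2)] is_lchild_if_subtree[OF assms(2)]
    is_rchild_if_subtree[OF assms(2)]
  unfolding rigid_occurrence_iff by (meson subset_trans)

lemma inj_on_set_tree_NodeI:
  assumes "bst (Node l' y r')" and "inj_on f (set_tree l)" "inj_on f (set_tree r)"
    and "f ` set_tree l \<subseteq> set_tree l'" "f ` set_tree r \<subseteq> set_tree r'" "f x = y"
  shows "inj_on f (set_tree (Node l x r))"
proof (rule inj_onI)
  have below: "f z < y" if "z \<in> set_tree l" for z
    using that assms(1,4) by auto
  have above: "y < f z" if "z \<in> set_tree r" for z
    using that assms(1,5) by auto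
  fix z1 z2 assume "z1 \<in> set_tree (Node l x r)" "z2 \<in> set_tree (Node l x r)" "f z1 = f z2"
  then show "z1 = z2"
    using below[of z1] below[of z2] above[of z1] above[of z2] assms(2,3,6) by (auto dest: inj_onD)
qed

lemma rigid_occurrence_NodeI:
  assumes bst: "bst (Node l' y r')"
    and occ: "rigid_occurrence l' l f" "rigid_occurrence r' r f" and root: "f x = y"
    and left: "l \<noteq> Leaf \<Longrightarrow> l' \<noteq> Leaf \<and> f (value l) = value l'"
    and right: "r \<noteq> Leaf \<Longrightarrow> r' \<noteq> Leaf \<and> f (value r) = value r'"
  shows "rigid_occurrence (Node l' y r') (Node l x r) f"
proof -
  have "inj_on f (set_tree (Node l x r))"
    using bst occ root by (intro inj_on_set_tree_NodeI) (auto simp: rigid_occurrence_iff)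
  moreover have "f ` set_tree (Node l x r) \<subseteq> set_tree (Node l' y r')"
    using occ root by (auto simp: rigid_occurrence_iff)
  moreover have sub: "rigid_occurrence (Node l' y r') l f" "rigid_occurrence (Node l' y r') r f"
    using rigid_occurrence_if_subtree occ by simp_all
  moreover have "is_lchild (Node l' y r') (f a) (f b)"
    if "Node (Node l1 b r1) a r0 \<in> subtrees (Node l x r)" for l1 b r1 a r0
  proof (cases "l = Node l1 b r1 \<and> a = x")
    case True
    with left obtain ll lr where "l' = Node ll (f b) lr"
      by (cases l') auto
    with True root show ?thesis
      by (auto simp: is_lchild_def)
  next
    case False
    with that have "Node (Node l1 b r1) a r0 \<in> subtrees l \<union> subtrees r"
      by auto
    then show ?thesis
      using occurrence_left_edge[OF sub(1)] occurrence_left_edge[OF sub(2)] by auto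
  qed
  moreover have "is_rchild (Node l' y r') (f a) (f b)"
    if "Node l0 a (Node l1 b r1) \<in> subtrees (Node l x r)" for l0 a l1 b r1
  proof (cases "r = Node l1 b r1 \<and> a = x")
    case True
    with right obtain rl rr where "r' = Node rl (f b) rr"
      by (cases r') auto
    with True root show ?thesis
      by (auto simp: is_rchild_def)
  next
    case False
    with that have "Node l0 a (Node l1 b r1) \<in> subtrees l \<union> subtrees r"
      by auto
    then show ?thesis
      using occurrence_right_edge[OF sub(1)] occurrence_right_edge[OF sub(2)] by auto
  qed
  ultimately show ?thesis
    unfolding rigid_occurrence_iff by blast
qed

lemma rigid_occurrence_if_embeds_at_root:
  assumes "bst P" "bst S" "embeds_at_root P S"
  shows "\<exists>f. rigid_occurrence S P f \<and> (P \<noteq> Leaf \<longrightarrow> f (value P) = value S)"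
  using assms
proof (induction P arbitrary: S)
  case Leaf
  show ?case
    by (simp add: rigid_occurrence_iff)
next
  case (Node l x r)
  then obtain l' y r' where S: "S = Node l' y r'" and emb: "embeds_at_root l l'" "embeds_at_root r r'"
    by (cases S) auto
  obtain fl where fl: "rigid_occurrence l' l fl" "l \<noteq> Leaf \<longrightarrow> fl (value l) = value l'"
    using Node.IH(1)[of l'] Node.prems S emb by auto
  obtain fr where fr: "rigid_occurrence r' r fr" "r \<noteq> Leaf \<longrightarrow> fr (value r) = value r'"
    using Node.IH(2)[of r'] Node.prems S emb by auto
  define f where "f z = (if z \<in> set_tree l then fl z else if z = x then y else fr z)" for z
  have "rigid_occurrence l' l f" "rigid_occurrence r' r f" "f x = y"
    using rigid_occurrence_cong[OF fl(1), of f] rigid_occurrence_cong[OF fr(1), of f] Node.prems(1)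
    by (force simp: f_def)+
  moreover have "l' \<noteq> Leaf \<and> f (value l) = value l'" if "l \<noteq> Leaf"
    using that emb(1) fl(2) by (cases l; cases l') (auto simp: f_def)
  moreover have "r' \<noteq> Leaf \<and> f (value r) = value r'" if "r \<noteq> Leaf"
    using that emb(2) fr(2) Node.prems(1) by (cases r; cases r') (auto simp: f_def)
  ultimately have "rigid_occurrence S (Node l x r) f"
    using rigid_occurrence_NodeI Node.prems(2) S by blast
  then show ?case
    using \<open>f x = y\<close> S by auto
qed

lemma contains_if_has_subtree_embeds_at_root:
  assumes "bst T" "bst P" and "has_subtree (embeds_at_root P) T"
  shows "contains T P e"
proof -
  from assms(3) obtain S where "S \<in> subtrees T" "embeds_at_root P S"
    by (auto simp: has_subtree_def)
  moreover from this obtain f where "rigid_occurrence S P f"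
    using rigid_occurrence_if_embeds_at_root assms(1,2) bst_if_subtree by blast
  ultimately show ?thesis
    using rigid_occurrence_if_subtree occurrence_if_rigid_occurrence contains_iff_occurrence by blast
qed

text \<open>A relaxed edge only shows that the subtree on its side is nonempty, which suffices when the
  child is a leaf \<open>C\<close> of the pattern.\<close>
lemma embeds_at_root_left_child:
  assumes "bst T" "Node l' a r' \<in> subtrees T"
    and "if rigid then is_lchild T a b else in_lsub T a b" and "rigid \<or> C = Node Leaf c Leaf"
    and "\<And>l1 r1. Node l1 b r1 \<in> subtrees T \<Longrightarrow> embeds_at_root C (Node l1 b r1)"
  shows "embeds_at_root C l'"
proof (cases rigid)
  case True
  with assms(3) obtain l1 r1 r0 where sub: "Node (Node l1 b r1) a r0 \<in> subtrees T"
    by (auto simp: is_lchild_def)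
  then have "l' = Node l1 b r1"
    using bst_subtree_unique[OF assms(1,2)] by blast
  moreover have "Node l1 b r1 \<in> subtrees T"
    using subtrees_trans[OF sub] by simp
  ultimately show ?thesis
    using assms(5) by simp
next
  case False
  with assms(3) obtain l'' r'' where "Node l'' a r'' \<in> subtrees T" "b \<in> set_tree l''"
    by (auto simp: in_lsub_def)
  then have "l' \<noteq> Leaf"
    using bst_subtree_unique[OF assms(1,2)] by fastforce
  with False assms(4) show ?thesis
    by (cases l') auto
qed

lemma embeds_at_root_right_child:
  assumes "bst T" "Node l' a r' \<in> subtrees T"
    and "if rigid then is_rchild T a b else in_rsub T a b" and "rigid \<or> C = Node Leaf c Leaf"
    and "\<And>l1 r1. Node l1 b r1 \<in> subtrees T \<Longrightarrow> embeds_at_root C (Node l1 b r1)"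
  shows "embeds_at_root C r'"
proof (cases rigid)
  case True
  with assms(3) obtain l1 r1 l0 where sub: "Node l0 a (Node l1 b r1) \<in> subtrees T"
    by (auto simp: is_rchild_def)
  then have "r' = Node l1 b r1"
    using bst_subtree_unique[OF assms(1,2)] by blast
  moreover have "Node l1 b r1 \<in> subtrees T"
    using subtrees_trans[OF sub] by simp
  ultimately show ?thesis
    using assms(5) by simp
next
  case False
  with assms(3) obtain l'' r'' where "Node l'' a r'' \<in> subtrees T" "b \<in> set_tree r''"
    by (auto simp: in_rsub_def)
  then have "r' \<noteq> Leaf"
    using bst_subtree_unique[OF assms(1,2)] by fastforce
  with False assms(4) show ?thesis
    by (cases r') auto
qed

definition relaxed_only_at_leaves :: "nat tree \<Rightarrow> (nat \<Rightarrow> bool) \<Rightarrow> bool" where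
  "relaxed_only_at_leaves P e \<longleftrightarrow>
     (\<forall>l b r a r0. Node (Node l b r) a r0 \<in> subtrees P \<or> Node r0 a (Node l b r) \<in> subtrees P \<longrightarrow>
        l \<noteq> Leaf \<or> r \<noteq> Leaf \<longrightarrow> e b)"

lemma embeds_at_root_if_occurrence:
  assumes "bst T" "occurrence T P e f" "relaxed_only_at_leaves P e"
    and "Q \<in> subtrees P" "Q \<noteq> Leaf" "Node l' (f (value Q)) r' \<in> subtrees T"
  shows "embeds_at_root Q (Node l' (f (value Q)) r')"
  using assms(4-6)
proof (induction Q arbitrary: l' r')
  case (Node ql a qr)
  have sub: "Node ql a qr \<in> subtrees P" and root: "Node l' (f a) r' \<in> subtrees T"
    using Node.prems by simp_all
  have children: "ql \<in> subtrees P" "qr \<in> subtrees P"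
    using subtrees_trans[OF sub] by simp_all
  have "embeds_at_root ql l'"
  proof (cases "ql = Leaf")
    case False
    then obtain ll b lr where ql: "ql = Node ll b lr"
      by (cases ql) auto
    show ?thesis
    proof (rule embeds_at_root_left_child[OF assms(1) root])
      show "if e b then is_lchild T (f a) (f b) else in_lsub T (f a) (f b)"
        using occurrence_left_edge[OF assms(2)] sub ql by blast
      show "e b \<or> ql = Node Leaf b Leaf"
        using assms(3) sub ql unfolding relaxed_only_at_leaves_def by blast
      show "embeds_at_root ql (Node l1 (f b) r1)" if "Node l1 (f b) r1 \<in> subtrees T" for l1 r1
        using Node.IH(1)[of l1 r1] children ql that by simp
    qed
  qed simp
  moreover have "embeds_at_root qr r'"
  proof (cases "qr = Leaf")
    case False
    then obtain rl b rr where qr: "qr = Node rl b rr"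
      by (cases qr) auto
    show ?thesis
    proof (rule embeds_at_root_right_child[OF assms(1) root])
      show "if e b then is_rchild T (f a) (f b) else in_rsub T (f a) (f b)"
        using occurrence_right_edge[OF assms(2)] sub qr by blast
      show "e b \<or> qr = Node Leaf b Leaf"
        using assms(3) sub qr unfolding relaxed_only_at_leaves_def by blast
      show "embeds_at_root qr (Node l1 (f b) r1)" if "Node l1 (f b) r1 \<in> subtrees T" for l1 r1
        using Node.IH(2)[of l1 r1] children qr that by simp
    qed
  qed simp
  ultimately show ?case
    by simp
qed simp

lemma has_subtree_embeds_at_root_if_contains:
  assumes "bst T" "contains T P e" "relaxed_only_at_leaves P e"
  shows "has_subtree (embeds_at_root P) T"
proof (cases "P = Leaf")
  case True
  then show ?thesis
    unfolding has_subtree_def by (intro bexI[of _ T]) simp_all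
next
  case False
  obtain f where occ: "occurrence T P e f"
    using assms(2) contains_iff_occurrence by blast
  then have "f (value P) \<in> set_tree T"
    using False by (cases P) (auto simp: occurrence_def)
  then obtain l' r' where "Node l' (f (value P)) r' \<in> subtrees T"
    by (blast dest: set_treeE)
  then show ?thesis
    using embeds_at_root_if_occurrence[OF assms(1) occ assms(3) self_in_subtrees False]
    by (auto simp: has_subtree_def)
qed

lemma contains_iff_has_subtree_embeds_at_root:
  assumes "bst T" "bst P" "relaxed_only_at_leaves P e"
  shows "contains T P e \<longleftrightarrow> has_subtree (embeds_at_root P) T"
  using assms contains_if_has_subtree_embeds_at_root has_subtree_embeds_at_root_if_contains by blast

lemma set_bst_of_preorder: "set_tree (bst_of_preorder xs) \<subseteq> set xs"
  by (induction xs rule: bst_of_preorder.induct) auto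

lemma bst_pat_tree: "bst (pat_tree xs)"
  unfolding pat_tree_def
  by (induction xs rule: bst_of_preorder.induct) (auto dest: set_bst_of_preorder[THEN subsetD])

lemma relaxed_only_at_leaves_patterns:
  "relaxed_only_at_leaves (pat_tree [2,1,3,4]) (pat_e [2,1,3,4] [x2,True,x4])"
  "relaxed_only_at_leaves (pat_tree [3,2,1,4]) (pat_e [3,2,1,4] [True,x3,x4])"
  "relaxed_only_at_leaves (pat_tree [1,3,2,4]) (pat_e [1,3,2,4] [True,x3,x4])"
  unfolding pat_tree_2134 pat_tree_3214 pat_tree_1324 relaxed_only_at_leaves_def
  by (auto simp: pat_e_def)

lemma has_subtree_embeds_1243_if_left_branch_below:
  assumes "Node l0 a (Node l1 b R) \<in> subtrees T" and "Node L c R' \<in> subtrees R" and "L \<noteq> Leaf"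
  shows "has_subtree (embeds_at_root (pat_tree [1,2,4,3])) T"
  using assms
proof (induction R arbitrary: l0 a l1 b)
  case (Node Rl d Rr)
  show ?case
  proof (cases "Rl = Leaf")
    case True
    with Node.prems have "Node L c R' \<in> subtrees Rr"
      by auto
    moreover have "Node l1 b (Node Leaf d Rr) \<in> subtrees T"
      using subtrees_trans[OF Node.prems(1)] True by simp
    ultimately show ?thesis
      using Node.IH(2) Node.prems(3) by blast
  next
    case False
    then have "embeds_at_root (pat_tree [1,2,4,3]) (Node l0 a (Node l1 b (Node Rl d Rr)))"
      unfolding embeds_at_root_1243 by simp
    then show ?thesis
      using Node.prems(1) by (auto simp: has_subtree_def)
  qed
qed simp

text \<open>The edge from \<open>2\<close> to \<open>4\<close> may be relaxed although \<open>4\<close> is not a leaf of the pattern: the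
  first left turn on the way down from the image of \<open>2\<close> gives a rigid occurrence.\<close>
lemma contains_1243_iff:
  assumes "bst T"
  shows "contains T (pat_tree [1,2,4,3]) (pat_e [1,2,4,3] [True,x3,x4]) \<longleftrightarrow>
           has_subtree (embeds_at_root (pat_tree [1,2,4,3])) T"
proof
  assume "contains T (pat_tree [1,2,4,3]) (pat_e [1,2,4,3] [True,x3,x4])"
  then obtain f where "occurrence T (pat_tree [1,2,4,3]) (pat_e [1,2,4,3] [True,x3,x4]) f"
    using contains_iff_occurrence by blast
  note occ = this[unfolded pat_tree_1243]
  have "is_rchild T (f 1) (f 2)" and in_rsub: "in_rsub T (f 2) (f 4)" and in_lsub: "in_lsub T (f 4) (f 3)"
    using occurrence_right_edge[OF occ, of Leaf 1 Leaf 2] occurrence_right_edge[OF occ, of Leaf 2]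
      occurrence_left_edge[OF occ, of Leaf 3 Leaf 4] in_rsub_if_is_rchild in_lsub_if_is_lchild
    by (auto simp: pat_e_def split: if_splits)
  then obtain l0 l1 R where sub1: "Node l0 (f 1) (Node l1 (f 2) R) \<in> subtrees T"
    by (auto simp: is_rchild_def)
  from in_rsub obtain l2 R2 where "Node l2 (f 2) R2 \<in> subtrees T" "f 4 \<in> set_tree R2"
    by (auto simp: in_rsub_def)
  moreover have "Node l1 (f 2) R \<in> subtrees T" "R \<in> subtrees T"
    using subtrees_trans[OF sub1] by simp_all
  ultimately have "f 4 \<in> set_tree R"
    using bst_subtree_unique[OF assms] by blast
  from in_lsub obtain l4 r4 where sub4: "Node l4 (f 4) r4 \<in> subtrees T" and "f 3 \<in> set_tree l4"
    by (auto simp: in_lsub_def)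
  then have "l4 \<noteq> Leaf"
    by auto
  obtain L R' where "Node L (f 4) R' \<in> subtrees R"
    using set_treeE[OF \<open>f 4 \<in> set_tree R\<close>] by blast
  moreover from this have "L = l4"
    using bst_subtree_unique[OF assms _ sub4] subtrees_trans[OF \<open>R \<in> subtrees T\<close>] by blast
  ultimately show "has_subtree (embeds_at_root (pat_tree [1,2,4,3])) T"
    using has_subtree_embeds_1243_if_left_branch_below[OF sub1] \<open>l4 \<noteq> Leaf\<close> by blast
next
  assume "has_subtree (embeds_at_root (pat_tree [1,2,4,3])) T"
  then show "contains T (pat_tree [1,2,4,3]) (pat_e [1,2,4,3] [True,x3,x4])"
    using contains_if_has_subtree_embeds_at_root[OF assms bst_pat_tree] by blast
qed

section \<open>Counting the avoiding shapes\<close>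

lemma finite_unit_trees_of_size: "finite {T :: unit tree. size T = n}"
proof (cases "n = 0")
  case True
  then show ?thesis
    by simp
next
  case False
  have "(UNIV :: step set) = {U, D, FL, FR}"
    using step.exhaust by blast
  then have "finite (UNIV :: step set)"
    by (metis finite.emptyI finite_insert)
  then have "finite {w :: step list. length w = n - 1}"
    using finite_lists_length_eq[of "UNIV :: step set" "n - 1"] by simp
  then have "finite {w :: step list. length w = n - 1 \<and> motzkin w}"
    by (rule finite_subset[rotated]) auto
  then show ?thesis
    using bij_betw_finite[OF bij_betw_fpath_unit] False by simp
qed

lemma A025242_if_recurrence:
  fixes v k :: "nat \<Rightarrow> nat"
  assumes v0: "v 0 = 1" and vS: "\<And>n. v (Suc n) = v n + k (Suc n)" and k1: "k 1 = 0"
    and kS: "\<And>n. k (Suc (Suc n)) = k (Suc n) + (\<Sum>a\<le>n. v a * v (n - a))"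
  shows "v n = A025242 n"
proof (induction n rule: less_induct)
  case (less n)
  show ?case
  proof (cases "n \<le> 3")
    case True
    have "v 1 = 1" "v 2 = 2" "v 3 = 5"
      using v0 vS[of 0] vS[of 1] vS[of 2] k1 kS[of 0] kS[of 1]
      by (simp_all add: numeral_2_eq_2 numeral_3_eq_3)
    with True v0 show ?thesis
      by (auto simp: A025242_def numeral_2_eq_2 numeral_3_eq_3 le_Suc_eq)
  next
    case False
    define m where "m = n - 4"
    have n: "n = Suc (Suc (Suc (Suc m)))"
      using False unfolding m_def by arith
    let ?S = "\<Sum>i\<le>m. v (Suc i) * v (Suc m - i)"
    have "(\<Sum>a\<le>Suc (Suc m). v a * v (Suc (Suc m) - a)) =
            v 0 * v (Suc (Suc m)) + (\<Sum>i\<le>Suc m. v (Suc i) * v (Suc m - i))"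
      by (subst sum.atMost_Suc_shift) simp
    also have "\<dots> = 2 * v (Suc (Suc m)) + ?S"
      using v0 by simp
    finally have "v (Suc (Suc (Suc (Suc m)))) = 2 * v (Suc (Suc (Suc m))) + v (Suc (Suc m)) + ?S"
      using vS[of "Suc (Suc (Suc m))"] vS[of "Suc (Suc m)"] kS[of "Suc (Suc m)"] by linarith
    moreover have "?S = (\<Sum>i\<le>m. a25242_aux i * a25242_aux (m - i))"
      using less.IH n by (intro sum.cong) (auto simp: A025242_def Suc_diff_le)
    ultimately show ?thesis
      using less.IH[of "Suc (Suc (Suc m))"] less.IH[of "Suc (Suc m)"] n by (simp add: A025242_def)
  qed
qed

fun grow_spine :: "nat \<Rightarrow> unit tree \<Rightarrow> unit tree" where
  "grow_spine 0 T = Node Leaf () T"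
| "grow_spine (Suc k) Leaf = Node Leaf () Leaf"
| "grow_spine (Suc k) (Node X u R) = Node X u (grow_spine k R)"

lemma size_grow_spine[simp]: "size (grow_spine k T) = Suc (size T)"
  by (induction k T rule: grow_spine.induct) auto

lemma grow_spine_neq_Leaf[simp]: "grow_spine k T \<noteq> Leaf" "Leaf \<noteq> grow_spine k T"
  by (cases "(k, T)" rule: grow_spine.cases; simp)+

lemma inj_grow_spine: "inj (grow_spine k)"
proof (rule injI)
  show "grow_spine k S = grow_spine k T \<Longrightarrow> S = T" for S T
  proof (induction k S arbitrary: T rule: grow_spine.induct)
    case (2 k)
    then show ?case
      by (cases T) auto
  next
    case (3 k X u R)
    then show ?case
      by (cases T) auto
  qed simp
qed

lemma grow_spine_neq_right_leaf:
  assumes "R \<noteq> Leaf"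
  shows "grow_spine k (Node X () R) \<noteq> Node X' () (Node Y' () Leaf)"
proof (cases k)
  case (Suc k')
  with assms show ?thesis
    by (cases k'; cases R) auto
qed (use assms in auto)

lemma finite_size_slice: "finite {T \<in> A. size T = m}" for A :: "unit tree set"
  using finite_unit_trees_of_size[of m] by (rule finite_subset[rotated]) auto

lemma card_pair_shapes:
  fixes A :: "unit tree set"
  shows "card {Node X () (Node Y () Leaf) | X Y. X \<in> A \<and> Y \<in> A \<and> size X + size Y = n} =
           (\<Sum>a\<le>n. card {T \<in> A. size T = a} * card {T \<in> A. size T = n - a})"
proof -
  let ?pairs = "\<Union>a\<le>n. {T \<in> A. size T = a} \<times> {T \<in> A. size T = n - a}"
  have "{Node X () (Node Y () Leaf) | X Y. X \<in> A \<and> Y \<in> A \<and> size X + size Y = n} =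
          (\<lambda>(X, Y). Node X () (Node Y () Leaf)) ` ?pairs"
    by force
  moreover have "inj_on (\<lambda>(X, Y). Node X () (Node Y () Leaf)) ?pairs"
    by (auto simp: inj_on_def)
  moreover have "card ?pairs = (\<Sum>a\<le>n. card {T \<in> A. size T = a} * card {T \<in> A. size T = n - a})"
    using finite_size_slice by (subst card_UN_disjoint) (auto simp: card_cartesian_product)
  ultimately show ?thesis
    by (simp add: card_image)
qed

lemma card_spine_grown_shapes:
  fixes A K :: "unit tree set"
  assumes K_right: "\<And>T. T \<in> K \<Longrightarrow> \<exists>X R. T = Node X () R \<and> R \<noteq> Leaf"
    and K_eq: "K = {Node X () (Node Y () Leaf) | X Y. X \<in> A \<and> Y \<in> A} \<union> grow_spine k ` K"
  shows "card {T \<in> K. size T = Suc (Suc m)} = card {T \<in> K. size T = Suc m} +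
           (\<Sum>a\<le>m. card {T \<in> A. size T = a} * card {T \<in> A. size T = m - a})"
proof -
  let ?B = "{Node X () (Node Y () Leaf) | X Y. X \<in> A \<and> Y \<in> A \<and> size X + size Y = m}"
  have K_iff: "T \<in> K \<longleftrightarrow> T \<in> {Node X () (Node Y () Leaf) | X Y. X \<in> A \<and> Y \<in> A} \<union> grow_spine k ` K"
    for T
    by (simp only: K_eq[symmetric])
  have "{T \<in> K. size T = Suc (Suc m)} = ?B \<union> grow_spine k ` {T \<in> K. size T = Suc m}"
  proof (intro equalityI subsetI)
    fix T assume "T \<in> {T \<in> K. size T = Suc (Suc m)}"
    then show "T \<in> ?B \<union> grow_spine k ` {T \<in> K. size T = Suc m}"
      using K_iff[of T] by auto
  next
    fix T assume "T \<in> ?B \<union> grow_spine k ` {T \<in> K. size T = Suc m}"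
    then have "T \<in> {Node X () (Node Y () Leaf) | X Y. X \<in> A \<and> Y \<in> A} \<union> grow_spine k ` K"
      and "size T = Suc (Suc m)"
      by auto
    then show "T \<in> {T \<in> K. size T = Suc (Suc m)}"
      using K_iff[of T] by simp
  qed
  moreover have "?B \<inter> grow_spine k ` {T \<in> K. size T = Suc m} = {}"
    using grow_spine_neq_right_leaf K_right by fastforce
  moreover have "card (grow_spine k ` {T \<in> K. size T = Suc m}) = card {T \<in> K. size T = Suc m}"
    using inj_on_subset[OF inj_grow_spine subset_UNIV] by (rule card_image)
  moreover have "finite ?B"
    using finite_unit_trees_of_size[of "Suc (Suc m)"] by (rule finite_subset[rotated]) auto
  ultimately show ?thesis
    using finite_size_slice card_pair_shapes[of A m] by (simp add: card_Un_disjoint)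
qed

text \<open>An avoiding shape is \<open>Leaf\<close>, \<open>Node X () Leaf\<close> with \<open>X\<close> avoiding, or lies in \<open>K\<close>: this
  gives the first recurrence of \<open>A025242_if_recurrence\<close>, and \<open>K_eq\<close> the second.\<close>
lemma card_avoiding_shapes_eq_A025242:
  fixes g :: "unit tree \<Rightarrow> bool"
  defines "A \<equiv> {T. \<not> has_subtree g T}"
    and "K \<equiv> {T. \<not> has_subtree g T \<and> (\<exists>X R. T = Node X () R \<and> R \<noteq> Leaf)}"
  assumes g_Leaf: "\<not> g Leaf" and g_right_Leaf: "\<And>X. \<not> g (Node X () Leaf)"
    and K_eq: "K = {Node X () (Node Y () Leaf) | X Y. X \<in> A \<and> Y \<in> A} \<union> grow_spine k ` K"
  shows "card {T \<in> A. size T = n} = A025242 n"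
proof (rule A025242_if_recurrence[where v = "\<lambda>n. card {T \<in> A. size T = n}"
      and k = "\<lambda>n. card {T \<in> K. size T = n}"])
  have "{T \<in> A. size T = 0} = {Leaf}"
    using g_Leaf by (auto simp: A_def)
  then show "card {T \<in> A. size T = 0} = 1"
    by simp
  show "card {T \<in> A. size T = Suc m} = card {T \<in> A. size T = m} + card {T \<in> K. size T = Suc m}"
    for m
  proof -
    have "{T \<in> A. size T = Suc m} = (\<lambda>X. Node X () Leaf) ` {T \<in> A. size T = m} \<union> {T \<in> K. size T = Suc m}"
    proof (intro equalityI subsetI)
      fix T assume "T \<in> {T \<in> A. size T = Suc m}"
      then show "T \<in> (\<lambda>X. Node X () Leaf) ` {T \<in> A. size T = m} \<union> {T \<in> K. size T = Suc m}"
        by (cases T) (auto simp: A_def K_def)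
    qed (use g_Leaf g_right_Leaf in \<open>auto simp: A_def K_def\<close>)
    moreover have "(\<lambda>X. Node X () Leaf) ` {T \<in> A. size T = m} \<inter> {T \<in> K. size T = Suc m} = {}"
      by (auto simp: K_def)
    ultimately show ?thesis
      using finite_size_slice by (simp add: card_Un_disjoint card_image inj_on_def)
  qed
  have "{T \<in> K. size T = 1} = {}"
    by (auto simp: K_def)
  then show "card {T \<in> K. size T = 1} = 0"
    by (metis card.empty)
  show "card {T \<in> K. size T = Suc (Suc m)} = card {T \<in> K. size T = Suc m} +
          (\<Sum>a\<le>m. card {T \<in> A. size T = a} * card {T \<in> A. size T = m - a})" for m
    using K_eq by (rule card_spine_grown_shapes[rotated]) (auto simp: K_def)
qed

lemma card_avoiding_shapes_2134:
  "card {T :: unit tree. size T = n \<and> \<not> has_subtree (embeds_at_root (pat_tree [2,1,3,4])) T} =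
     A025242 n"
proof -
  let ?g = "\<lambda>S :: unit tree. \<exists>l a rl c rr. S = Node l a (Node rl c rr) \<and> l \<noteq> Leaf \<and> rr \<noteq> Leaf"
  let ?A = "{T. \<not> has_subtree ?g T}"
  let ?K = "{T. \<not> has_subtree ?g T \<and> (\<exists>X R. T = Node X () R \<and> R \<noteq> Leaf)}"
  have K_eq: "?K = {Node X () (Node Y () Leaf) | X Y. X \<in> ?A \<and> Y \<in> ?A} \<union> grow_spine 0 ` ?K"
  proof (intro equalityI subsetI)
    fix T assume "T \<in> ?K"
    then obtain X Y Z where T: "T = Node X () (Node Y () Z)" and avoid: "\<not> has_subtree ?g T"
      by (auto simp: neq_Leaf_iff)
    show "T \<in> {Node X () (Node Y () Leaf) | X Y. X \<in> ?A \<and> Y \<in> ?A} \<union> grow_spine 0 ` ?K"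
    proof (cases "Z = Leaf")
      case True
      then show ?thesis
        using T avoid by auto
    next
      case False
      then have "X = Leaf"
        using T avoid by auto
      with T avoid False show ?thesis
        by (auto intro!: image_eqI[of _ _ "Node Y () Z"])
    qed
  next
    fix T assume "T \<in> {Node X () (Node Y () Leaf) | X Y. X \<in> ?A \<and> Y \<in> ?A} \<union> grow_spine 0 ` ?K"
    then show "T \<in> ?K"
      by auto
  qed
  have "card {T \<in> ?A. size T = n} = A025242 n"
    by (rule card_avoiding_shapes_eq_A025242[OF _ _ K_eq]) auto
  then show ?thesis
    unfolding embeds_at_root_2134 by (simp add: conj_commute)
qed

lemma card_avoiding_shapes_1324:
  "card {T :: unit tree. size T = n \<and> \<not> has_subtree (embeds_at_root (pat_tree [1,3,2,4])) T} =
     A025242 n"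
proof -
  let ?g = "\<lambda>S :: unit tree. \<exists>l a rl c rr. S = Node l a (Node rl c rr) \<and> rl \<noteq> Leaf \<and> rr \<noteq> Leaf"
  let ?A = "{T. \<not> has_subtree ?g T}"
  let ?K = "{T. \<not> has_subtree ?g T \<and> (\<exists>X R. T = Node X () R \<and> R \<noteq> Leaf)}"
  have K_eq: "?K = {Node X () (Node Y () Leaf) | X Y. X \<in> ?A \<and> Y \<in> ?A} \<union> grow_spine 1 ` ?K"
  proof (intro equalityI subsetI)
    fix T assume "T \<in> ?K"
    then obtain X Y Z where T: "T = Node X () (Node Y () Z)" and avoid: "\<not> has_subtree ?g T"
      by (auto simp: neq_Leaf_iff)
    show "T \<in> {Node X () (Node Y () Leaf) | X Y. X \<in> ?A \<and> Y \<in> ?A} \<union> grow_spine 1 ` ?K"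
    proof (cases "Z = Leaf")
      case True
      then show ?thesis
        using T avoid by auto
    next
      case False
      then have "Y = Leaf"
        using T avoid by auto
      with T avoid False show ?thesis
        by (auto simp: One_nat_def intro!: image_eqI[of _ _ "Node X () Z"])
    qed
  next
    fix T assume "T \<in> {Node X () (Node Y () Leaf) | X Y. X \<in> ?A \<and> Y \<in> ?A} \<union> grow_spine 1 ` ?K"
    then show "T \<in> ?K"
      by (auto simp: One_nat_def)
  qed
  have "card {T \<in> ?A. size T = n} = A025242 n"
    by (rule card_avoiding_shapes_eq_A025242[OF _ _ K_eq]) auto
  then show ?thesis
    unfolding embeds_at_root_1324 by (simp add: conj_commute)
qed

lemma card_avoiding_shapes_1243:
  "card {T :: unit tree. size T = n \<and> \<not> has_subtree (embeds_at_root (pat_tree [1,2,4,3])) T} =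
     A025242 n"
proof -
  let ?g = "\<lambda>S :: unit tree. \<exists>l a l2 b l3 c r3. S = Node l a (Node l2 b (Node l3 c r3)) \<and> l3 \<noteq> Leaf"
  let ?A = "{T. \<not> has_subtree ?g T}"
  let ?K = "{T. \<not> has_subtree ?g T \<and> (\<exists>X R. T = Node X () R \<and> R \<noteq> Leaf)}"
  have K_eq: "?K = {Node X () (Node Y () Leaf) | X Y. X \<in> ?A \<and> Y \<in> ?A} \<union> grow_spine 2 ` ?K"
  proof (intro equalityI subsetI)
    fix T assume "T \<in> ?K"
    then obtain X Y Z where T: "T = Node X () (Node Y () Z)" and avoid: "\<not> has_subtree ?g T"
      by (auto simp: neq_Leaf_iff)
    show "T \<in> {Node X () (Node Y () Leaf) | X Y. X \<in> ?A \<and> Y \<in> ?A} \<union> grow_spine 2 ` ?K"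
    proof (cases "Z = Leaf")
      case True
      then show ?thesis
        using T avoid by auto
    next
      case False
      then obtain Z2 where "Z = Node Leaf () Z2"
        using T avoid by (cases Z) auto
      with T avoid show ?thesis
        by (auto simp: numeral_2_eq_2 intro!: image_eqI[of _ _ "Node X () (Node Y () Z2)"])
    qed
  next
    fix T assume "T \<in> {Node X () (Node Y () Leaf) | X Y. X \<in> ?A \<and> Y \<in> ?A} \<union> grow_spine 2 ` ?K"
    then show "T \<in> ?K"
      by (auto simp: numeral_2_eq_2 neq_Leaf_iff)
  qed
  have "card {T \<in> ?A. size T = n} = A025242 n"
    by (rule card_avoiding_shapes_eq_A025242[OF _ _ K_eq]) auto
  then show ?thesis
    unfolding embeds_at_root_1243 by (simp add: conj_commute)
qed

lemma has_subtree_mirror: "has_subtree g (mirror T) \<longleftrightarrow> has_subtree (g \<circ> mirror) T"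
  by (induction T) auto

lemma mirror_eq_Node_iff: "mirror S = Node l a r \<longleftrightarrow> S = Node (mirror r) a (mirror l)"
  by (cases S) auto

lemma embeds_at_root_3214_mirror:
  "embeds_at_root (pat_tree [3,2,1,4]) \<circ> mirror = embeds_at_root (pat_tree [2,1,3,4])"
  unfolding embeds_at_root_3214 embeds_at_root_2134
  by (fastforce simp: fun_eq_iff mirror_eq_Node_iff)

lemma card_avoiding_shapes_3214:
  "card {T :: unit tree. size T = n \<and> \<not> has_subtree (embeds_at_root (pat_tree [3,2,1,4])) T} =
     A025242 n"
proof -
  have mirror: "has_subtree (embeds_at_root (pat_tree [3,2,1,4])) (mirror T) \<longleftrightarrow>
                 has_subtree (embeds_at_root (pat_tree [2,1,3,4])) T" for T :: "unit tree"
    by (simp only: has_subtree_mirror embeds_at_root_3214_mirror)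
  have "{T :: unit tree. size T = n \<and> \<not> has_subtree (embeds_at_root (pat_tree [3,2,1,4])) T} =
          mirror ` {T. size T = n \<and> \<not> has_subtree (embeds_at_root (pat_tree [2,1,3,4])) T}"
  proof (intro equalityI subsetI)
    fix T :: "unit tree"
    assume "T \<in> {T. size T = n \<and> \<not> has_subtree (embeds_at_root (pat_tree [3,2,1,4])) T}"
    then show "T \<in> mirror ` {T. size T = n \<and> \<not> has_subtree (embeds_at_root (pat_tree [2,1,3,4])) T}"
      using mirror[of "mirror T"] by (auto intro!: image_eqI[of _ mirror "mirror T"])
  qed (use mirror in auto)
  moreover have "inj mirror"
    by (metis injI mirror_mirror)
  ultimately show ?thesis
    by (simp only: card_image[OF inj_on_subset[OF \<open>inj mirror\<close> subset_UNIV]] card_avoiding_shapes_2134)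
qed

lemma A025242_first_values: "map A025242 [1..<11] = [1,2,5,13,35,97,275,794,2327,6905]"
  by code_simp

lemma bst_if_bsts: "T \<in> bsts n \<Longrightarrow> bst T"
  unfolding bsts_def bst_iff_sorted_wrt_less by (simp del: upt_Suc)

lemma avoiders_c_eq_has_subtree:
  assumes "\<And>T. bst T \<Longrightarrow> contains T (pat_tree tau) (pat_e tau xs) \<longleftrightarrow> has_subtree g T"
  shows "avoiders_c n tau xs = {T \<in> bsts n. \<not> has_subtree g T}"
  using assms bst_if_bsts by (auto simp: avoiders_c_def avoiders_def)

lemma avoiders_c_local_patterns:
  "avoiders_c n [2,1,3,4] [x2,True,x4] = {T \<in> bsts n. \<not> has_subtree (embeds_at_root (pat_tree [2,1,3,4])) T}"
  "avoiders_c n [3,2,1,4] [True,x3,x4] = {T \<in> bsts n. \<not> has_subtree (embeds_at_root (pat_tree [3,2,1,4])) T}"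
  "avoiders_c n [1,3,2,4] [True,x3,x4] = {T \<in> bsts n. \<not> has_subtree (embeds_at_root (pat_tree [1,3,2,4])) T}"
  "avoiders_c n [1,2,4,3] [True,x3,x4] = {T \<in> bsts n. \<not> has_subtree (embeds_at_root (pat_tree [1,2,4,3])) T}"
  using contains_iff_has_subtree_embeds_at_root[OF _ bst_pat_tree relaxed_only_at_leaves_patterns(1)]
    contains_iff_has_subtree_embeds_at_root[OF _ bst_pat_tree relaxed_only_at_leaves_patterns(2)]
    contains_iff_has_subtree_embeds_at_root[OF _ bst_pat_tree relaxed_only_at_leaves_patterns(3)]
    contains_1243_iff
  by (intro avoiders_c_eq_has_subtree; blast)+

lemma bij_betw_fpath_avoiders:
  assumes "n \<ge> 1" and "\<And>T :: nat tree. (\<exists>z\<in>Z. sublist z (fpath T)) \<longleftrightarrow> has_subtree g T"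
  shows "bij_betw fpath {T \<in> bsts n. \<not> has_subtree g T} (motzkin_avoid (n - 1) Z)"
proof -
  have "motzkin_avoid (n - 1) Z = {w \<in> {w. length w = n - 1 \<and> motzkin w}. \<not> (\<exists>z\<in>Z. sublist z w)}"
    by (auto simp: motzkin_avoid_def)
  then show ?thesis
    by (simp only:) (rule bij_betw_Collect[OF bij_betw_fpath_bsts[OF assms(1)]], simp add: assms(2))
qed

lemma card_motzkin_avoid:
  assumes "n \<ge> 1" and "\<And>T :: unit tree. (\<exists>z\<in>Z. sublist z (fpath T)) \<longleftrightarrow> has_subtree g T"
  shows "card (motzkin_avoid (n - 1) Z) = card {T :: unit tree. size T = n \<and> \<not> has_subtree g T}"
proof -
  have "motzkin_avoid (n - 1) Z = {w \<in> {w. length w = n - 1 \<and> motzkin w}. \<not> (\<exists>z\<in>Z. sublist z w)}"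
    by (auto simp: motzkin_avoid_def)
  then have "bij_betw fpath {T \<in> {T :: unit tree. size T = n}. \<not> has_subtree g T} (motzkin_avoid (n - 1) Z)"
    by (simp only:) (rule bij_betw_Collect[OF bij_betw_fpath_unit[OF assms(1)]], simp add: assms(2))
  then show ?thesis
    by (simp add: bij_betw_same_card)
qed

theorem theorem12:
  fixes n :: nat
  assumes "n \<ge> 1"
  shows
    "bij_betw fpath (avoiders_c n [2,1,3,4] [True,True,True])
                    (motzkin_avoid (n - 1) {[U,U], [U,FR]})
   \<and> bij_betw fpath (avoiders_c n [3,2,1,4] [True,True,True])
                    (motzkin_avoid (n - 1) {[D,U], [D,FL]})
   \<and> bij_betw fpath (avoiders_c n [1,3,2,4] [True,True,True])
                    (motzkin_avoid (n - 1) {[U,U], [FR,U]})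
   \<and> bij_betw fpath (avoiders_c n [1,2,4,3] [True,True,True])
                    (motzkin_avoid (n - 1)
                       {[x,y,z] | x y z. x \<in> {U,FR} \<and> y \<in> {U,FR} \<and> z \<in> {U,FL}})
   \<and> (\<forall>x2 x4. avoiders_c n [2,1,3,4] [x2,True,x4] = avoiders_c n [2,1,3,4] [True,True,True])
   \<and> (\<forall>x3 x4. avoiders_c n [3,2,1,4] [True,x3,x4] = avoiders_c n [3,2,1,4] [True,True,True])
   \<and> (\<forall>x3 x4. avoiders_c n [1,3,2,4] [True,x3,x4] = avoiders_c n [1,3,2,4] [True,True,True])
   \<and> (\<forall>x3 x4. avoiders_c n [1,2,4,3] [True,x3,x4] = avoiders_c n [1,2,4,3] [True,True,True])
   \<and> card (motzkin_avoid (n - 1) {[U,U], [U,FR]}) = card (motzkin_avoid (n - 1) {[D,U], [D,FL]})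
   \<and> card (motzkin_avoid (n - 1) {[D,U], [D,FL]}) = card (motzkin_avoid (n - 1) {[U,U], [FR,U]})
   \<and> card (motzkin_avoid (n - 1) {[U,U], [FR,U]}) =
       card (motzkin_avoid (n - 1)
               {[x,y,z] | x y z. x \<in> {U,FR} \<and> y \<in> {U,FR} \<and> z \<in> {U,FL}})
   \<and> card (motzkin_avoid (n - 1) {[U,U], [U,FR]}) = A025242 n
   \<and> map A025242 [1..<11] = [1,2,5,13,35,97,275,794,2327,6905]"
proof -
  note bijections =
    bij_betw_fpath_avoiders[OF assms sublist_fpath_2134] bij_betw_fpath_avoiders[OF assms sublist_fpath_3214]
    bij_betw_fpath_avoiders[OF assms sublist_fpath_1324] bij_betw_fpath_avoiders[OF assms sublist_fpath_1243]
  note cards =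
    card_motzkin_avoid[OF assms sublist_fpath_2134] card_motzkin_avoid[OF assms sublist_fpath_3214]
    card_motzkin_avoid[OF assms sublist_fpath_1324] card_motzkin_avoid[OF assms sublist_fpath_1243]
  show ?thesis
    unfolding avoiders_c_local_patterns cards card_avoiding_shapes_2134 card_avoiding_shapes_3214
      card_avoiding_shapes_1324 card_avoiding_shapes_1243
    using bijections A025242_first_values by blast
qed

end
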